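(* Let $k\ge0$ be an integer and $t\ge1$ an odd integer. Let $\varphi$ be the endomorphism of $E$ given on generators by $\varphi(e_n)=e_n$ for $1\le n\le k$, $\varphi(e_n)=-e_n$ for $k+1\le n\le k+t$, and $\varphi(e_n)=-e_n+2e_1\cdots e_ke_{k+1}\cdots e_{k+t}e_n$ for $n>k+t$ (this $\varphi$ is an automorphism with $\varphi^2=\mathrm{id}$). Then $E_\varphi$ and $E_k$ are isomorphic as $\mathbb{Z}_2$-graded algebras.
   Context: $F$ is a field of characteristic zero, $L$ an infinite-dimensional $F$-vector space with basis $e_1,e_2,\ldots$, $E$ its Grassmann algebra. $E_\varphi$ is the $\mathbb{Z}_2$-grading on $E$ by the eigenspaces of $\varphi$ for $1$ (degree 0) and $-1$ (degree 1). $E_k$ is the $\mathbb{Z}_2$-grading in which $e_1,\ldots,e_k$ have degree $0$ and all other $e_i$ have degree $1$. *)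

theory Defs
  imports Main
begin

text \<open>An element of E is a finitely supported coefficient function
on monomials; a monomial e_{i_1} ... e_{i_m} (i_1 < ... < i_m) is represented by the
finite set {i_1,...,i_m} of positive naturals.\<close>

definition grass :: "(nat set \<Rightarrow> 'a::field) set" where
  "grass = {x. finite {S. x S \<noteq> 0} \<and> (\<forall>S. x S \<noteq> 0 \<longrightarrow> finite S \<and> 0 \<notin> S)}"

text \<open>Sign of moving the monomial e_S past e_T into increasing order.\<close>
definition gsign :: "nat set \<Rightarrow> nat set \<Rightarrow> 'a::field" where
  "gsign S T = (-1) ^ card {(i,j). i \<in> S \<and> j \<in> T \<and> j < i}"

definition gmult :: "(nat set \<Rightarrow> 'a::field) \<Rightarrow> (nat set \<Rightarrow> 'a) \<Rightarrow> (nat set \<Rightarrow> 'a)" where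
  "gmult x y = (\<lambda>U. if finite U then (\<Sum>S\<in>Pow U. gsign S (U - S) * x S * y (U - S)) else 0)"

definition gadd :: "(nat set \<Rightarrow> 'a::field) \<Rightarrow> (nat set \<Rightarrow> 'a) \<Rightarrow> (nat set \<Rightarrow> 'a)" where
  "gadd x y = (\<lambda>S. x S + y S)"

definition gsmult :: "'a::field \<Rightarrow> (nat set \<Rightarrow> 'a) \<Rightarrow> (nat set \<Rightarrow> 'a)" where
  "gsmult c x = (\<lambda>S. c * x S)"

definition gneg :: "(nat set \<Rightarrow> 'a::field) \<Rightarrow> (nat set \<Rightarrow> 'a)" where
  "gneg x = (\<lambda>S. - x S)"

definition gone :: "nat set \<Rightarrow> 'a::field" where
  "gone = (\<lambda>S. if S = {} then 1 else 0)"

definition gen :: "nat \<Rightarrow> nat set \<Rightarrow> 'a::field" where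
  "gen n = (\<lambda>S. if S = {n} then 1 else 0)"

definition gprod :: "nat list \<Rightarrow> nat set \<Rightarrow> 'a::field" where
  "gprod xs = foldr gmult (map gen xs) gone"

definition grass_endo :: "((nat set \<Rightarrow> 'a::field) \<Rightarrow> (nat set \<Rightarrow> 'a)) \<Rightarrow> bool" where
  "grass_endo f \<longleftrightarrow>
     (\<forall>x\<in>grass. f x \<in> grass) \<and>
     (\<forall>x\<in>grass. \<forall>y\<in>grass. f (gadd x y) = gadd (f x) (f y)) \<and>
     (\<forall>c. \<forall>x\<in>grass. f (gsmult c x) = gsmult c (f x)) \<and>
     (\<forall>x\<in>grass. \<forall>y\<in>grass. f (gmult x y) = gmult (f x) (f y)) \<and>
     f gone = gone"

definition Ephi0 :: "((nat set \<Rightarrow> 'a::field) \<Rightarrow> (nat set \<Rightarrow> 'a)) \<Rightarrow> (nat set \<Rightarrow> 'a) set" where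
  "Ephi0 phi = {x \<in> grass. phi x = x}"

definition Ephi1 :: "((nat set \<Rightarrow> 'a::field) \<Rightarrow> (nat set \<Rightarrow> 'a)) \<Rightarrow> (nat set \<Rightarrow> 'a) set" where
  "Ephi1 phi = {x \<in> grass. phi x = gneg x}"

text \<open>Z_2-grading E_k: e_1..e_k of degree 0, other e_i of degree 1; so a monomial
e_S has degree the parity of the number of its indices greater than k.\<close>
definition Ek0 :: "nat \<Rightarrow> (nat set \<Rightarrow> 'a::field) set" where
  "Ek0 k = {x \<in> grass. \<forall>S. x S \<noteq> 0 \<longrightarrow> even (card {i \<in> S. k < i})}"

definition Ek1 :: "nat \<Rightarrow> (nat set \<Rightarrow> 'a::field) set" where
  "Ek1 k = {x \<in> grass. \<forall>S. x S \<noteq> 0 \<longrightarrow> odd (card {i \<in> S. k < i})}"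

definition graded_iso ::
  "(nat set \<Rightarrow> 'a::field) set \<Rightarrow> (nat set \<Rightarrow> 'a) set \<Rightarrow> (nat set \<Rightarrow> 'a) set \<Rightarrow> (nat set \<Rightarrow> 'a) set
    \<Rightarrow> ((nat set \<Rightarrow> 'a) \<Rightarrow> (nat set \<Rightarrow> 'a)) \<Rightarrow> bool" where
  "graded_iso A0 A1 B0 B1 psi \<longleftrightarrow>
     grass_endo psi \<and> bij_betw psi grass grass \<and> psi ` A0 = B0 \<and> psi ` A1 = B1"

end

theory Submission
  imports Defs "HOL-Library.Function_Algebras"
begin

text \<open>
  Let w = e_1 ... e_{k+t}, and for a monomial e_S let d(S) be the number of indices in S
  above k. For a scalar s and a function beta on the naturals, the linear map
  e_S |-> s^d(S) e_S + beta(d(S)) w e_S is an algebra endomorphism as soon as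
  beta(m + n) = (s eps)^m beta(n) + s^n beta(m) with eps = (-1)^(k+t): it suffices to compare
  products of monomials, using w^2 = 0 and e_S w = eps^|S| w e_S. Both phi
  (s = -1, beta(m) = -2 (-1)^m (1 + eps + ... + eps^(m-1))) and the grading automorphism sigma
  of E_k (s = -1, beta = 0) are of this form. Such maps compose within the family; hence
  psi (s = 1, beta(m) = 1 + eps + ... + eps^(m-1)) is invertible, and since t is odd,
  psi phi = sigma psi. So psi maps the eigenspaces of phi onto those of sigma, which are the
  homogeneous components of E_k.
\<close>

definition gmono :: "nat set \<Rightarrow> nat set \<Rightarrow> 'a::field" where
  "gmono S = (\<lambda>U. if U = S then 1 else 0)"

lemma sum_fun_apply: "sum f A x = (\<Sum>i\<in>A. f i x)"
  by (induction A rule: infinite_finite_induct) auto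

lemma gadd_eq_plus: "gadd x y = x + y"
  by (simp add: gadd_def fun_eq_iff)

lemma gneg_eq_gsmult: "gneg x = gsmult (-1) x"
  by (simp add: gneg_def gsmult_def fun_eq_iff)

lemma gen_eq_gmono: "gen n = gmono {n}"
  by (simp add: gen_def gmono_def)

lemma gone_eq_gmono: "gone = gmono {}"
  by (simp add: gone_def gmono_def)

lemma mem_grass_iff:
  "x \<in> grass \<longleftrightarrow> finite {S. x S \<noteq> 0} \<and> (\<forall>S. x S \<noteq> 0 \<longrightarrow> finite S \<and> 0 \<notin> S)"
  by (simp add: grass_def)

lemma gmono_in_grass: "finite S \<Longrightarrow> 0 \<notin> S \<Longrightarrow> gmono S \<in> grass"
  by (auto simp: mem_grass_iff gmono_def)

lemma gen_in_grass: "1 \<le> n \<Longrightarrow> gen n \<in> grass"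
  by (simp add: gen_eq_gmono gmono_in_grass)

lemma gone_in_grass: "gone \<in> grass"
  by (simp add: gone_eq_gmono gmono_in_grass)

lemma zero_in_grass: "0 \<in> grass"
  by (simp add: mem_grass_iff)

lemma plus_in_grass:
  assumes "x \<in> grass" "y \<in> grass"
  shows "x + y \<in> grass"
proof -
  have "{S. (x + y) S \<noteq> 0} \<subseteq> {S. x S \<noteq> 0} \<union> {S. y S \<noteq> 0}"
    by auto
  with assms show ?thesis
    by (auto simp: mem_grass_iff intro: finite_subset)
qed

lemma sum_in_grass: "(\<And>i. i \<in> A \<Longrightarrow> f i \<in> grass) \<Longrightarrow> sum f A \<in> grass"
  by (induction A rule: infinite_finite_induct) (auto simp: zero_in_grass plus_in_grass)

lemma gsmult_in_grass:
  assumes "x \<in> grass"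
  shows "gsmult c x \<in> grass"
proof -
  have "{S. gsmult c x S \<noteq> 0} \<subseteq> {S. x S \<noteq> 0}"
    by (auto simp: gsmult_def)
  with assms show ?thesis
    by (auto simp: mem_grass_iff gsmult_def intro: finite_subset)
qed

lemma gneg_in_grass: "x \<in> grass \<Longrightarrow> gneg x \<in> grass"
  by (simp add: gneg_eq_gsmult gsmult_in_grass)

lemma gmult_nonzeroE:
  assumes "gmult x y U \<noteq> 0"
  obtains S T where "x S \<noteq> 0" "y T \<noteq> 0" "U = S \<union> T"
proof -
  from assms have "(\<Sum>S\<in>Pow U. gsign S (U - S) * x S * y (U - S)) \<noteq> 0"
    by (auto simp: gmult_def split: if_splits)
  then obtain S where "S \<in> Pow U" "gsign S (U - S) * x S * y (U - S) \<noteq> 0"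
    using sum.not_neutral_contains_not_neutral by blast
  then show ?thesis
    by (intro that[of S "U - S"]) auto
qed

lemma gmult_in_grass:
  assumes x: "x \<in> grass" and y: "y \<in> grass"
  shows "gmult x y \<in> grass"
proof -
  let ?supp = "(\<lambda>(S, T). S \<union> T) ` ({S. x S \<noteq> 0} \<times> {T. y T \<noteq> 0})"
  have "{U. gmult x y U \<noteq> 0} \<subseteq> ?supp"
    by (auto elim!: gmult_nonzeroE)
  moreover have "finite ?supp"
    using x y by (auto simp: mem_grass_iff)
  ultimately have "finite {U. gmult x y U \<noteq> 0}"
    by (rule finite_subset)
  moreover have "finite U \<and> 0 \<notin> U" if "gmult x y U \<noteq> 0" for U
    using that x y by (auto simp: mem_grass_iff elim!: gmult_nonzeroE)
  ultimately show ?thesis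
    by (simp add: mem_grass_iff)
qed

lemma gprod_in_grass: "\<forall>i\<in>set xs. 1 \<le> i \<Longrightarrow> gprod xs \<in> grass"
  by (induction xs) (auto simp: gprod_def gone_in_grass gen_in_grass gmult_in_grass)

lemma gmult_add_left: "gmult (x + y) z = gmult x z + gmult y z"
  by (auto simp: gmult_def fun_eq_iff algebra_simps sum.distrib)

lemma gmult_add_right: "gmult x (y + z) = gmult x y + gmult x z"
  by (auto simp: gmult_def fun_eq_iff algebra_simps sum.distrib)

lemma gmult_gsmult_left: "gmult (gsmult c x) y = gsmult c (gmult x y)"
  by (auto simp: gmult_def gsmult_def fun_eq_iff algebra_simps sum_distrib_left)

lemma gmult_gsmult_right: "gmult x (gsmult c y) = gsmult c (gmult x y)"
  by (auto simp: gmult_def gsmult_def fun_eq_iff algebra_simps sum_distrib_left)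

lemma gmult_zero_left: "gmult 0 y = 0"
  by (simp add: gmult_def fun_eq_iff)

lemma gmult_zero_right: "gmult x 0 = 0"
  by (simp add: gmult_def fun_eq_iff)

lemma gsmult_zero [simp]: "gsmult c 0 = 0"
  by (simp add: gsmult_def fun_eq_iff)

lemma gsmult_one [simp]: "gsmult 1 x = x"
  by (simp add: gsmult_def)

lemma gsmult_gsmult: "gsmult c (gsmult d x) = gsmult (c * d) x"
  by (simp add: gsmult_def fun_eq_iff)

lemma gsmult_sum: "gsmult c (sum f A) = (\<Sum>i\<in>A. gsmult c (f i))"
  by (simp add: gsmult_def fun_eq_iff sum_fun_apply sum_distrib_left)

lemma gmult_sum_left: "gmult (sum f A) y = (\<Sum>i\<in>A. gmult (f i) y)"
proof (induction A rule: infinite_finite_induct)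
  case (insert i A)
  then show ?case
    by (metis gmult_add_left sum.insert)
qed (metis gmult_zero_left sum.infinite sum.empty)+

lemma gmult_sum_right: "gmult x (sum f A) = (\<Sum>i\<in>A. gmult x (f i))"
proof (induction A rule: infinite_finite_induct)
  case (insert i A)
  then show ?case
    by (metis gmult_add_right sum.insert)
qed (metis gmult_zero_right sum.infinite sum.empty)+

lemma gmult_sum_sum:
  "gmult (\<Sum>i\<in>A. gsmult (a i) (f i)) (\<Sum>j\<in>B. gsmult (b j) (g j)) =
     (\<Sum>i\<in>A. \<Sum>j\<in>B. gsmult (a i * b j) (gmult (f i) (g j)))"
  unfolding gmult_sum_left gmult_gsmult_left
  unfolding gmult_sum_right gmult_gsmult_right gsmult_sum gsmult_gsmult
  by (simp only: mult.commute)

lemma gmult_gmono: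
  assumes "finite S" "finite T"
  shows "gmult (gmono S) (gmono T) =
           (if S \<inter> T = {} then gsmult (gsign S T) (gmono (S \<union> T)) else 0)"
proof
  fix U
  show "gmult (gmono S) (gmono T) U =
          (if S \<inter> T = {} then gsmult (gsign S T) (gmono (S \<union> T)) else 0) U"
  proof (cases "finite U \<and> S \<subseteq> U \<and> U - S = T")
    case True
    then have "gmult (gmono S) (gmono T) U =
                 (\<Sum>R\<in>Pow U. gsign R (U - R) * gmono S R * gmono T (U - R))"
      by (simp add: gmult_def)
    also have "\<dots> = (\<Sum>R\<in>Pow U. if R = S then gsign S T else 0)"
      by (rule sum.cong) (use True in \<open>auto simp: gmono_def\<close>)
    finally show ?thesis
      using True by (auto simp: gsmult_def gmono_def)
  next
    case False
    then have "gmult (gmono S) (gmono T) U = 0"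
      unfolding gmult_def gmono_def by (auto intro!: sum.neutral split: if_splits)
    with False assms show ?thesis
      by (auto simp: gsmult_def gmono_def)
  qed
qed

lemma grass_gmono_expansion:
  assumes "x \<in> grass"
  shows "x = (\<Sum>S | x S \<noteq> 0. gsmult (x S) (gmono S))"
proof
  fix U
  have "(\<Sum>S | x S \<noteq> 0. gsmult (x S) (gmono S)) U = (\<Sum>S | x S \<noteq> 0. if S = U then x U else 0)"
    unfolding sum_fun_apply gsmult_def gmono_def by (auto intro!: sum.cong)
  also have "\<dots> = x U"
    using assms by (simp add: mem_grass_iff sum.delta')
  finally show "x U = (\<Sum>S | x S \<noteq> 0. gsmult (x S) (gmono S)) U" ..
qed

lemma gsign_below:
  assumes "\<And>i j. i \<in> S \<Longrightarrow> j \<in> T \<Longrightarrow> i < j"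
  shows "gsign S T = 1"
proof -
  from assms have no_inversions: "{(i, j). i \<in> S \<and> j \<in> T \<and> j < i} = {}"
    by fastforce
  show ?thesis
    unfolding gsign_def no_inversions by simp
qed

lemma gsign_above:
  assumes "finite S" "finite T" "\<And>i j. i \<in> S \<Longrightarrow> j \<in> T \<Longrightarrow> j < i"
  shows "gsign S T = (-1) ^ (card S * card T)"
proof -
  from assms have all_inversions: "{(i, j). i \<in> S \<and> j \<in> T \<and> j < i} = S \<times> T"
    by fastforce
  show ?thesis
    unfolding gsign_def all_inversions by (simp add: card_cartesian_product)
qed

lemma card_inversions_union:
  assumes "finite S" "finite A" "finite B" "A \<inter> B = {}"
  shows "card {(i, j). i \<in> S \<and> j \<in> A \<union> B \<and> R i j} =
           card {(i, j). i \<in> S \<and> j \<in> A \<and> R i j} + card {(i, j). i \<in> S \<and> j \<in> B \<and> R i j}"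
proof -
  let ?X = "\<lambda>C. {(i, j). i \<in> S \<and> j \<in> C \<and> R i j}"
  have "?X (A \<union> B) = ?X A \<union> ?X B" "?X A \<inter> ?X B = {}"
    using assms(4) by auto
  moreover have "finite (?X C)" if "finite C" for C
    by (rule finite_subset[of _ "S \<times> C"]) (use assms that in auto)
  ultimately show ?thesis
    using assms by (simp add: card_Un_disjoint)
qed

lemma gsign_union_right:
  assumes "finite S" "finite A" "finite B" "A \<inter> B = {}"
  shows "gsign S (A \<union> B) = gsign S A * gsign S B"
  unfolding gsign_def card_inversions_union[OF assms] by (simp add: power_add)

lemma gsign_union_left:
  assumes "finite S" "finite A" "finite B" "A \<inter> B = {}"
  shows "gsign (A \<union> B) S = gsign A S * gsign B S"
proof -
  have swap: "card {(i, j). i \<in> C \<and> j \<in> S \<and> j < i} = card {(j, i). j \<in> S \<and> i \<in> C \<and> j < i}"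
    for C :: "nat set"
    by (rule bij_betw_same_card[of prod.swap]) (auto simp: bij_betw_def image_iff)
  show ?thesis
    unfolding gsign_def swap card_inversions_union[OF assms] by (simp add: power_add)
qed

lemma gprod_sorted:
  "sorted_wrt (<) xs \<Longrightarrow> (gprod xs :: nat set \<Rightarrow> 'a::field) = gmono (set xs)"
proof (induction xs)
  case Nil
  then show ?case
    by (simp add: gprod_def gone_eq_gmono)
next
  case (Cons x xs)
  have "gsign {x} (set xs) = (1::'a)"
    using Cons.prems by (intro gsign_below) auto
  moreover have "(gprod (x # xs) :: nat set \<Rightarrow> 'a) = gmult (gmono {x}) (gmono (set xs))"
    using Cons by (simp add: gprod_def gen_eq_gmono)
  moreover have "x \<notin> set xs"
    using Cons.prems by auto
  ultimately show ?case
    by (simp add: gmult_gmono)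
qed


section \<open>Endomorphisms are determined by the generators\<close>

lemma grass_endo_zero:
  assumes "grass_endo f"
  shows "f 0 = 0"
proof -
  have "(0 :: nat set \<Rightarrow> 'a) = gsmult 0 gone"
    by (simp add: gsmult_def fun_eq_iff)
  then have "f 0 = gsmult 0 (f gone)"
    using assms gone_in_grass unfolding grass_endo_def by metis
  then show ?thesis
    by (simp add: gsmult_def fun_eq_iff)
qed

lemma grass_endo_sum:
  assumes f: "grass_endo f" and h: "\<And>i. i \<in> A \<Longrightarrow> h i \<in> grass"
  shows "f (sum h A) = (\<Sum>i\<in>A. f (h i))"
  using h
proof (induction A rule: infinite_finite_induct)
  case (insert i A)
  then have "h i \<in> grass" "sum h A \<in> grass"
    by (auto intro: sum_in_grass)
  have "f (sum h (insert i A)) = f (h i + sum h A)"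
    using insert.hyps by simp
  also have "\<dots> = f (h i) + f (sum h A)"
    using f \<open>h i \<in> grass\<close> \<open>sum h A \<in> grass\<close> unfolding grass_endo_def gadd_eq_plus by blast
  also have "\<dots> = (\<Sum>i\<in>insert i A. f (h i))"
    using insert by simp
  finally show ?case .
qed (simp_all add: grass_endo_zero[OF f])

lemma grass_endo_gprod:
  assumes f: "grass_endo f"
  shows "\<forall>i\<in>set xs. 1 \<le> i \<Longrightarrow> f (gprod xs) = foldr gmult (map (f \<circ> gen) xs) gone"
proof (induction xs)
  case Nil
  with f show ?case
    by (simp add: gprod_def grass_endo_def)
next
  case (Cons i xs)
  then have "gen i \<in> grass" "gprod xs \<in> grass"
    by (auto intro: gen_in_grass gprod_in_grass)
  with f have "f (gmult (gen i) (gprod xs)) = gmult (f (gen i)) (f (gprod xs))"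
    unfolding grass_endo_def by blast
  with Cons show ?case
    by (simp add: gprod_def)
qed

lemma grass_endo_gmono_expansion:
  assumes f: "grass_endo f" and x: "x \<in> grass"
  shows "f x = (\<Sum>S | x S \<noteq> 0. gsmult (x S) (f (gmono S)))"
proof -
  have mono: "gmono S \<in> grass" if "x S \<noteq> 0" for S
  proof (rule gmono_in_grass)
    show "finite S" "0 \<notin> S"
      using that x by (auto simp: mem_grass_iff)
  qed
  have "f x = f (\<Sum>S | x S \<noteq> 0. gsmult (x S) (gmono S))"
    using grass_gmono_expansion[OF x] by simp
  also have "\<dots> = (\<Sum>S | x S \<noteq> 0. f (gsmult (x S) (gmono S)))"
    using mono by (intro grass_endo_sum[OF f]) (blast intro: gsmult_in_grass)
  also have "\<dots> = (\<Sum>S | x S \<noteq> 0. gsmult (x S) (f (gmono S)))"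
  proof (rule sum.cong)
    fix S
    assume "S \<in> {S. x S \<noteq> 0}"
    with f mono show "f (gsmult (x S) (gmono S)) = gsmult (x S) (f (gmono S))"
      unfolding grass_endo_def by blast
  qed simp
  finally show ?thesis .
qed

lemma grass_endo_eqI:
  assumes f: "grass_endo f" and g: "grass_endo g"
    and gens: "\<And>n. 1 \<le> n \<Longrightarrow> f (gen n) = g (gen n)" and x: "x \<in> grass"
  shows "f x = g x"
proof -
  have "f (gmono S) = g (gmono S)" if "x S \<noteq> 0" for S
  proof -
    let ?xs = "sorted_list_of_set S"
    from that x have S: "finite S" "0 \<notin> S"
      by (auto simp: mem_grass_iff)
    then have pos: "\<forall>i\<in>set ?xs. 1 \<le> i"
      by (auto simp: Suc_le_eq intro!: gr0I)
    have maps: "map (f \<circ> gen) ?xs = map (g \<circ> gen) ?xs"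
      using pos gens by auto
    have "gmono S = (gprod ?xs :: nat set \<Rightarrow> 'a)"
      using S by (simp add: gprod_sorted)
    then show ?thesis
      by (simp only: grass_endo_gprod[OF f pos] grass_endo_gprod[OF g pos] maps)
  qed
  then show ?thesis
    by (simp add: grass_endo_gmono_expansion[OF f x] grass_endo_gmono_expansion[OF g x])
qed


section \<open>Twisted scalings\<close>

definition high_card :: "nat \<Rightarrow> nat set \<Rightarrow> nat" where
  "high_card k S = card {i \<in> S. k < i}"

text \<open>In the notation above, twist k t s beta sends e_S to s^d(S) e_S + beta(d(S)) w e_S, where
  w e_S is the monomial of {1..k+t} \<union> S if S avoids {1..k+t}, and 0 otherwise.\<close>
definition twist :: "nat \<Rightarrow> nat \<Rightarrow> 'a::field \<Rightarrow> (nat \<Rightarrow> 'a) \<Rightarrow> (nat set \<Rightarrow> 'a) \<Rightarrow> nat set \<Rightarrow> 'a"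
  where "twist k t s \<beta> x = (\<lambda>U. s ^ high_card k U * x U +
     (if {1..k+t} \<subseteq> U then \<beta> (high_card k (U - {1..k+t})) * x (U - {1..k+t}) else 0))"

definition twist_cocycle :: "nat \<Rightarrow> 'a::field \<Rightarrow> (nat \<Rightarrow> 'a) \<Rightarrow> bool" where
  "twist_cocycle N s \<beta> \<longleftrightarrow> (\<forall>m n. \<beta> (m + n) = (s * (-1) ^ N) ^ m * \<beta> n + s ^ n * \<beta> m)"

lemma twist_cocycle_zero:
  assumes "twist_cocycle N s \<beta>"
  shows "\<beta> 0 = 0"
proof -
  from assms have "\<beta> (0 + 0) = (s * (-1) ^ N) ^ 0 * \<beta> 0 + s ^ 0 * \<beta> 0"
    unfolding twist_cocycle_def by blast
  then have "\<beta> 0 + \<beta> 0 = \<beta> 0 + 0"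
    by simp
  then show ?thesis
    by (rule add_left_imp_eq)
qed

lemma high_card_union:
  assumes "finite A" "finite B" "A \<inter> B = {}"
  shows "high_card k (A \<union> B) = high_card k A + high_card k B"
proof -
  have "{i \<in> A \<union> B. k < i} = {i \<in> A. k < i} \<union> {i \<in> B. k < i}"
    by auto
  with assms show ?thesis
    unfolding high_card_def by (simp add: card_Un_disjoint disjoint_iff)
qed

lemma high_card_block: "high_card k {1..k+t} = t"
proof -
  have "{i \<in> {1..k+t}. k < i} = {k+1..k+t}"
    by auto
  then show ?thesis
    by (simp add: high_card_def)
qed

lemma high_card_above: "(\<And>i. i \<in> S \<Longrightarrow> k < i) \<Longrightarrow> high_card k S = card S"
  unfolding high_card_def by (metis (no_types, lifting) Collect_cong Collect_mem_eq)

lemma high_card_singleton: "high_card k {n} = (if k < n then 1 else 0)"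
proof -
  have "{i \<in> {n}. k < i} = (if k < n then {n} else {})"
    by auto
  then show ?thesis
    by (simp add: high_card_def)
qed

lemma twist_add: "twist k t s \<beta> (x + y) = twist k t s \<beta> x + twist k t s \<beta> y"
  by (simp add: twist_def fun_eq_iff algebra_simps)

lemma twist_gsmult: "twist k t s \<beta> (gsmult c x) = gsmult c (twist k t s \<beta> x)"
  by (simp add: twist_def gsmult_def fun_eq_iff algebra_simps)

lemma twist_gneg: "twist k t s \<beta> (gneg x) = gneg (twist k t s \<beta> x)"
  by (simp add: gneg_eq_gsmult twist_gsmult)

lemma twist_zero: "twist k t s \<beta> 0 = 0"
  by (simp add: twist_def fun_eq_iff)

lemma twist_sum: "twist k t s \<beta> (sum f A) = (\<Sum>i\<in>A. twist k t s \<beta> (f i))"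
proof (induction A rule: infinite_finite_induct)
  case (insert i A)
  then show ?case
    by (metis sum.insert twist_add)
qed (metis twist_zero sum.infinite sum.empty)+

lemma twist_in_grass:
  assumes x: "x \<in> grass"
  shows "twist k t s \<beta> x \<in> grass"
proof -
  let ?P = "{1..k+t}" and ?A = "{S. x S \<noteq> 0}"
  have supp: "{U. twist k t s \<beta> x U \<noteq> 0} \<subseteq> ?A \<union> (\<lambda>V. ?P \<union> V) ` ?A"
  proof
    fix U
    assume "U \<in> {U. twist k t s \<beta> x U \<noteq> 0}"
    then have "x U \<noteq> 0 \<or> (?P \<subseteq> U \<and> x (U - ?P) \<noteq> 0)"
      by (auto simp: twist_def split: if_splits)
    moreover have "U = ?P \<union> (U - ?P)" if "?P \<subseteq> U"
      using that by auto
    ultimately show "U \<in> ?A \<union> (\<lambda>V. ?P \<union> V) ` ?A"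
      by blast
  qed
  have "finite {U. twist k t s \<beta> x U \<noteq> 0}"
    by (rule finite_subset[OF supp]) (use x in \<open>auto simp: mem_grass_iff\<close>)
  moreover have "finite U \<and> 0 \<notin> U" if "twist k t s \<beta> x U \<noteq> 0" for U
    using that supp x by (auto simp: mem_grass_iff)
  ultimately show ?thesis
    by (simp add: mem_grass_iff)
qed

lemma twist_gmono:
  "twist k t s \<beta> (gmono S) = gsmult (s ^ high_card k S) (gmono S) +
           (if S \<inter> {1..k+t} = {} then gsmult (\<beta> (high_card k S)) (gmono ({1..k+t} \<union> S)) else 0)"
proof
  fix U
  let ?P = "{1..k+t}"
  have block_term: "(if ?P \<subseteq> U then \<beta> (high_card k (U - ?P)) * gmono S (U - ?P) else 0)
      = (if S \<inter> ?P = {} \<and> U = ?P \<union> S then \<beta> (high_card k S) else 0)"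
    by (auto simp: gmono_def)
  have "(if S \<inter> ?P = {} then gsmult (\<beta> (high_card k S)) (gmono (?P \<union> S)) else 0) U
      = (if S \<inter> ?P = {} \<and> U = ?P \<union> S then \<beta> (high_card k S) else 0)"
    by (auto simp: gsmult_def gmono_def)
  moreover have "s ^ high_card k U * gmono S U = gsmult (s ^ high_card k S) (gmono S) U"
    by (simp add: gsmult_def gmono_def)
  ultimately show "twist k t s \<beta> (gmono S) U = (gsmult (s ^ high_card k S) (gmono S) +
      (if S \<inter> ?P = {} then gsmult (\<beta> (high_card k S)) (gmono (?P \<union> S)) else 0)) U"
    unfolding plus_fun_apply using block_term by (simp add: twist_def)
qed

lemma twist_gone: "\<beta> 0 = 0 \<Longrightarrow> twist k t s \<beta> gone = gone"
  by (simp add: gone_eq_gmono twist_gmono high_card_def gsmult_def fun_eq_iff)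

lemma twist_mult_gmono_above_block:
  fixes s :: "'a::field"
  assumes t: "1 \<le> t" and cocycle: "twist_cocycle (k + t) s \<beta>"
    and S: "finite S" "\<And>i. i \<in> S \<Longrightarrow> k + t < i"
    and T: "finite T" "\<And>i. i \<in> T \<Longrightarrow> k + t < i"
    and ST: "S \<inter> T = {}"
  shows "twist k t s \<beta> (gmult (gmono S) (gmono T)) =
           gmult (twist k t s \<beta> (gmono S)) (twist k t s \<beta> (gmono T))"
proof -
  let ?P = "{1..k+t}"
  have SP: "S \<inter> ?P = {}" and TP: "T \<inter> ?P = {}"
    using S(2) T(2) by fastforce+
  have cS: "high_card k S = card S"
    by (rule high_card_above) (use S(2) in fastforce)
  have cT: "high_card k T = card T"
    by (rule high_card_above) (use T(2) in fastforce)
  have cST: "high_card k (S \<union> T) = card S + card T"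
    using S T ST cS cT by (simp add: high_card_union)
  have sign_S_block: "gsign S (?P \<union> T) = ((-1) ^ (k+t)) ^ card S * (gsign S T :: 'a)"
  proof -
    have "gsign S (?P \<union> T) = gsign S ?P * (gsign S T :: 'a)"
      using S T TP by (intro gsign_union_right) auto
    also have "gsign S ?P = (-1) ^ (card S * card ?P)"
      using S by (intro gsign_above) fastforce+
    also have "\<dots> = ((-1) ^ (k+t)) ^ card S"
      by (simp add: power_mult[symmetric] mult.commute)
    finally show ?thesis .
  qed
  have sign_block_T: "gsign (?P \<union> S) T = (gsign S T :: 'a)"
  proof -
    have "gsign (?P \<union> S) T = gsign ?P T * (gsign S T :: 'a)"
      using S T SP by (intro gsign_union_left) auto
    also have "gsign ?P T = (1 :: 'a)"
      using T(2) by (intro gsign_below) fastforce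
    finally show ?thesis
      by simp
  qed
  have "1 \<in> ?P"
    using t by simp
  then have disj: "S \<inter> (?P \<union> T) = {}" "(?P \<union> S) \<inter> T = {}" "(?P \<union> S) \<inter> (?P \<union> T) \<noteq> {}"
    "(S \<union> T) \<inter> ?P = {}"
    using SP TP ST by auto
  have unions: "S \<union> (?P \<union> T) = ?P \<union> (S \<union> T)" "(?P \<union> S) \<union> T = ?P \<union> (S \<union> T)"
    by auto
  \<comment> \<open>e_S w = eps^|S| w e_S, so the w-components of both sides agree by the cocycle identity\<close>
  have coeff: "\<beta> (card S + card T) = (s * (-1) ^ (k+t)) ^ card S * \<beta> (card T) + s ^ card T * \<beta> (card S)"
    using cocycle by (simp add: twist_cocycle_def)
  show ?thesis
    using ST SP TP disj unions S(1) T(1) sign_S_block sign_block_T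
    apply (simp add: twist_gmono gmult_gmono gmult_add_left gmult_add_right gmult_gsmult_left
        gmult_gsmult_right gmult_zero_left gmult_zero_right twist_add twist_gsmult gsmult_gsmult
        cS cT cST)
    apply (rule ext)
    apply (simp only: plus_fun_apply gsmult_def sign_S_block sign_block_T coeff)
    apply (simp add: algebra_simps power_add power_mult_distrib)
    done
qed

lemma twist_mult_gmono:
  fixes s :: "'a::field"
  assumes t: "1 \<le> t" and cocycle: "twist_cocycle (k + t) s \<beta>"
    and S: "finite S" "0 \<notin> S" and T: "finite T" "0 \<notin> T"
  shows "twist k t s \<beta> (gmult (gmono S) (gmono T)) =
           gmult (twist k t s \<beta> (gmono S)) (twist k t s \<beta> (gmono T))"
proof -
  let ?P = "{1..k+t}"
  have "1 \<in> ?P"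
    using t by simp
  note simps = twist_gmono gmult_gmono gmult_add_left gmult_add_right gmult_gsmult_left
    gmult_gsmult_right gmult_zero_left gmult_zero_right twist_add twist_gsmult twist_zero gsmult_gsmult
    S(1) T(1)
  consider (overlap) "S \<inter> T \<noteq> {}"
    | (meets_block) "S \<inter> T = {}" "S \<inter> ?P \<noteq> {} \<or> T \<inter> ?P \<noteq> {}"
    | (above_block) "S \<inter> T = {}" "S \<inter> ?P = {}" "T \<inter> ?P = {}"
    by blast
  then show ?thesis
  proof cases
    case overlap
    then have "S \<inter> (?P \<union> T) \<noteq> {}" "(?P \<union> S) \<inter> T \<noteq> {}" "(?P \<union> S) \<inter> (?P \<union> T) \<noteq> {}"
      by auto
    with overlap show ?thesis
      by (simp add: simps)
  next
    case meets_block
    \<comment> \<open>every product involving w vanishes, since S or T meets {1..k+t}\<close>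
    have "s ^ high_card k (S \<union> T) = s ^ high_card k S * s ^ high_card k T"
      using S T meets_block by (simp add: high_card_union power_add)
    moreover have "(S \<union> T) \<inter> ?P \<noteq> {}" "(?P \<union> S) \<inter> (?P \<union> T) \<noteq> {}"
      "S \<inter> ?P = {} \<Longrightarrow> (?P \<union> S) \<inter> T \<noteq> {}" "S \<inter> ?P \<noteq> {} \<Longrightarrow> S \<inter> (?P \<union> T) \<noteq> {}"
      using meets_block \<open>1 \<in> ?P\<close> by auto
    ultimately show ?thesis
      using meets_block by (cases "S \<inter> ?P = {}") (simp_all add: simps mult_ac)
  next
    case above_block
    have "k + t < i" if "i \<in> S \<union> T" for i
      using that above_block S(2) T(2) by (cases "i = 0") auto
    with above_block S T show ?thesis
      by (intro twist_mult_gmono_above_block[OF t cocycle]) auto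
  qed
qed

lemma twist_mult:
  fixes s :: "'a::field"
  assumes t: "1 \<le> t" and cocycle: "twist_cocycle (k + t) s \<beta>"
    and x: "x \<in> grass" and y: "y \<in> grass"
  shows "twist k t s \<beta> (gmult x y) = gmult (twist k t s \<beta> x) (twist k t s \<beta> y)"
proof -
  let ?L = "twist k t s \<beta>"
  have expand: "?L z = (\<Sum>S | z S \<noteq> 0. gsmult (z S) (?L (gmono S)))" if "z \<in> grass" for z
    by (subst grass_gmono_expansion[OF that]) (simp add: twist_sum twist_gsmult)
  have "gmult x y = gmult (\<Sum>S | x S \<noteq> 0. gsmult (x S) (gmono S)) (\<Sum>T | y T \<noteq> 0. gsmult (y T) (gmono T))"
    using grass_gmono_expansion[OF x] grass_gmono_expansion[OF y] by simp
  then have "?L (gmult x y) =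
      (\<Sum>S | x S \<noteq> 0. \<Sum>T | y T \<noteq> 0. gsmult (x S * y T) (?L (gmult (gmono S) (gmono T))))"
    by (simp add: gmult_sum_sum twist_sum twist_gsmult)
  also have "\<dots> =
      (\<Sum>S | x S \<noteq> 0. \<Sum>T | y T \<noteq> 0. gsmult (x S * y T) (gmult (?L (gmono S)) (?L (gmono T))))"
  proof (intro sum.cong refl)
    fix S T
    assume "S \<in> {S. x S \<noteq> 0}" "T \<in> {T. y T \<noteq> 0}"
    with x y have "finite S" "0 \<notin> S" "finite T" "0 \<notin> T"
      by (auto simp: mem_grass_iff)
    then show "gsmult (x S * y T) (?L (gmult (gmono S) (gmono T))) =
        gsmult (x S * y T) (gmult (?L (gmono S)) (?L (gmono T)))"
      by (simp add: twist_mult_gmono[OF t cocycle])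
  qed
  also have "\<dots> = gmult (?L x) (?L y)"
    by (simp add: expand[OF x] expand[OF y] gmult_sum_sum)
  finally show ?thesis .
qed

lemma grass_endo_twist:
  fixes s :: "'a::field"
  assumes "1 \<le> t" "twist_cocycle (k + t) s \<beta>"
  shows "grass_endo (twist k t s \<beta>)"
  unfolding grass_endo_def gadd_eq_plus
  using assms by (simp add: twist_in_grass twist_add twist_gsmult twist_mult twist_gone twist_cocycle_zero)

lemma twist_twist:
  assumes t: "1 \<le> t" and x: "x \<in> grass"
  shows "twist k t s \<beta> (twist k t s' \<beta>' x) =
           twist k t (s * s') (\<lambda>m. s ^ (t + m) * \<beta>' m + s' ^ m * \<beta> m) x"
proof
  fix U
  let ?P = "{1..k+t}"
  define V where "V = U - ?P"
  have "1 \<in> ?P" "1 \<notin> V"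
    using t by (auto simp: V_def)
  then have "\<not> ?P \<subseteq> V"
    by blast
  show "twist k t s \<beta> (twist k t s' \<beta>' x) U =
          twist k t (s * s') (\<lambda>m. s ^ (t + m) * \<beta>' m + s' ^ m * \<beta> m) x U"
  proof (cases "?P \<subseteq> U \<and> finite U")
    case True
    then have "high_card k U = t + high_card k V"
      using high_card_union[of ?P V k] high_card_block[of k t] by (simp add: V_def Un_absorb1)
    with True \<open>\<not> ?P \<subseteq> V\<close> V_def[symmetric] show ?thesis
      by (simp add: twist_def power_add power_mult_distrib algebra_simps)
  next
    case False
    \<comment> \<open>high_card is additive only on finite sets; for infinite U both x U and x V vanish\<close>
    moreover have "x U = 0 \<and> x V = 0" if "infinite U"
      using that x by (auto simp: mem_grass_iff V_def)
    ultimately show ?thesis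
      using \<open>\<not> ?P \<subseteq> V\<close> V_def[symmetric] by (auto simp: twist_def power_mult_distrib)
  qed
qed

lemma twist_one_zero: "twist k t 1 (\<lambda>_. 0) x = x"
  by (simp add: twist_def fun_eq_iff)

lemma bij_betw_twist_one:
  assumes "1 \<le> t"
  shows "bij_betw (twist k t 1 \<beta>) grass grass"
proof (rule bij_betw_byWitness[where f' = "twist k t 1 (\<lambda>m. - \<beta> m)"])
  show "\<forall>x\<in>grass. twist k t 1 (\<lambda>m. - \<beta> m) (twist k t 1 \<beta> x) = x"
    "\<forall>x\<in>grass. twist k t 1 \<beta> (twist k t 1 (\<lambda>m. - \<beta> m) x) = x"
    using assms by (simp_all add: twist_twist twist_one_zero)
qed (auto intro: twist_in_grass)


section \<open>The automorphism \<open>\<phi>\<close> and the conjugating automorphism \<open>\<psi>\<close>\<close>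

definition sign_power_sum :: "nat \<Rightarrow> nat \<Rightarrow> 'a::field" where
  "sign_power_sum N m = (\<Sum>i<m. ((-1) ^ N) ^ i)"

lemma twist_cocycle_sign_power_sum: "twist_cocycle N 1 (sign_power_sum N :: nat \<Rightarrow> 'a::field)"
  unfolding twist_cocycle_def
proof (intro allI)
  fix m n
  show "sign_power_sum N (m + n) = (1 * (-1) ^ N) ^ m * sign_power_sum N n + 1 ^ n * (sign_power_sum N m :: 'a)"
    by (induction n) (simp_all add: sign_power_sum_def power_add algebra_simps)
qed

lemma twist_cocycle_rescale:
  assumes "twist_cocycle N 1 \<beta>"
  shows "twist_cocycle N s (\<lambda>m. c * s ^ m * \<beta> m)"
  using assms unfolding twist_cocycle_def by (simp add: power_add power_mult_distrib algebra_simps)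

definition grass_phi :: "nat \<Rightarrow> nat \<Rightarrow> (nat set \<Rightarrow> 'a::field) \<Rightarrow> nat set \<Rightarrow> 'a" where
  "grass_phi k t = twist k t (-1) (\<lambda>m. - 2 * (-1) ^ m * sign_power_sum (k + t) m)"

definition grass_psi :: "nat \<Rightarrow> nat \<Rightarrow> (nat set \<Rightarrow> 'a::field) \<Rightarrow> nat set \<Rightarrow> 'a" where
  "grass_psi k t = twist k t 1 (sign_power_sum (k + t))"

definition prescribed_on_generators ::
  "nat \<Rightarrow> nat \<Rightarrow> ((nat set \<Rightarrow> 'a::field) \<Rightarrow> nat set \<Rightarrow> 'a) \<Rightarrow> bool" where
  "prescribed_on_generators k t phi \<longleftrightarrow>
     (\<forall>n. 1 \<le> n \<and> n \<le> k \<longrightarrow> phi (gen n) = gen n) \<and>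
     (\<forall>n. k + 1 \<le> n \<and> n \<le> k + t \<longrightarrow> phi (gen n) = gneg (gen n)) \<and>
     (\<forall>n. k + t < n \<longrightarrow>
        phi (gen n) = gadd (gneg (gen n)) (gsmult 2 (gmult (gprod [1..<k+t+1]) (gen n))))"

lemma grass_endo_grass_phi: "1 \<le> t \<Longrightarrow> grass_endo (grass_phi k t)"
  unfolding grass_phi_def
  by (intro grass_endo_twist twist_cocycle_rescale twist_cocycle_sign_power_sum)

lemma grass_endo_grass_psi: "1 \<le> t \<Longrightarrow> grass_endo (grass_psi k t)"
  unfolding grass_psi_def by (intro grass_endo_twist twist_cocycle_sign_power_sum)

lemma gmult_gprod_block_gen:
  assumes "k + t < n"
  shows "gmult (gprod [1..<k+t+1]) (gen n) = (gmono ({1..k+t} \<union> {n}) :: nat set \<Rightarrow> 'a::field)"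
proof -
  have "set [1..<k+t+1] = {1..k+t}"
    by auto
  then have "(gprod [1..<k+t+1] :: nat set \<Rightarrow> 'a) = gmono {1..k+t}"
    using gprod_sorted[OF sorted_wrt_upt] by metis
  moreover have "gsign {1..k+t} {n} = (1 :: 'a)"
    using assms by (intro gsign_below) auto
  ultimately show ?thesis
    using assms by (simp add: gen_eq_gmono gmult_gmono)
qed

lemma grass_phi_prescribed:
  "prescribed_on_generators k t (grass_phi k t :: (nat set \<Rightarrow> 'a::field) \<Rightarrow> _)"
proof -
  note simps = grass_phi_def gen_eq_gmono twist_gmono high_card_singleton
  have "grass_phi k t (gen n) = (gen n :: nat set \<Rightarrow> 'a)" if "1 \<le> n" "n \<le> k" for n
    using that by (simp add: simps)
  moreover have "grass_phi k t (gen n) = gneg (gen n :: nat set \<Rightarrow> 'a)" if "k < n" "n \<le> k + t" for n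
    using that by (simp add: simps gneg_eq_gsmult)
  moreover have "grass_phi k t (gen n) =
      gadd (gneg (gen n)) (gsmult 2 (gmult (gprod [1..<k+t+1]) (gen n :: nat set \<Rightarrow> 'a)))"
    if "k + t < n" for n
  proof -
    have "sign_power_sum (k + t) 1 = (1 :: 'a)"
      by (simp add: sign_power_sum_def)
    with that show ?thesis
      unfolding gmult_gprod_block_gen[OF that]
      by (simp add: simps gneg_eq_gsmult gadd_eq_plus gsmult_def fun_eq_iff)
  qed
  ultimately show ?thesis
    unfolding prescribed_on_generators_def by auto
qed

lemma prescribed_grass_endo_eq_grass_phi:
  assumes t: "1 \<le> t" and phi: "grass_endo phi" "prescribed_on_generators k t phi"
    and x: "x \<in> grass"
  shows "phi x = grass_phi k t x"
proof (rule grass_endo_eqI[OF phi(1) grass_endo_grass_phi[OF t] _ x])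
  fix n :: nat
  assume "1 \<le> n"
  have grass_phi: "prescribed_on_generators k t (grass_phi k t :: (nat set \<Rightarrow> 'a) \<Rightarrow> _)"
    by (rule grass_phi_prescribed)
  consider "n \<le> k" | "k + 1 \<le> n \<and> n \<le> k + t" | "k + t < n"
    by linarith
  then show "phi (gen n) = grass_phi k t (gen n)"
    using \<open>1 \<le> n\<close> phi(2) grass_phi unfolding prescribed_on_generators_def by cases auto
qed

lemma grass_psi_conj_grass_phi:
  assumes "1 \<le> t" "odd t" "x \<in> grass"
  shows "grass_psi k t (grass_phi k t x) = twist k t (-1) (\<lambda>_. 0) (grass_psi k t x)"
proof -
  have "(-1 :: 'a) ^ t = -1"
    using assms(2) by simp
  then have "(\<lambda>m. 1 ^ (t + m) * (- 2 * (-1) ^ m * sign_power_sum (k + t) m) + (-1) ^ m * sign_power_sum (k + t) m)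
      = (\<lambda>m. (-1) ^ (t + m) * sign_power_sum (k + t) m + 1 ^ m * (0 :: 'a))"
    by (simp add: fun_eq_iff power_add algebra_simps)
  with assms show ?thesis
    unfolding grass_psi_def grass_phi_def by (simp add: twist_twist twist_in_grass)
qed

lemma minus_eq_self_iff: "- a = (a :: 'a::field_char_0) \<longleftrightarrow> a = 0"
  by (simp add: neg_eq_iff_add_eq_0 mult_2[symmetric])

lemma twist_grading_apply: "twist k t (-1) (\<lambda>_. 0) x = (\<lambda>U. (-1) ^ high_card k U * x U)"
  by (simp add: twist_def fun_eq_iff)

lemma Ek0_eq_fixed: "Ek0 k = {x \<in> grass. twist k t (-1) (\<lambda>_. 0) x = (x :: nat set \<Rightarrow> 'a::field_char_0)}"
proof -
  have "(-1) ^ high_card k U * x U = x U \<longleftrightarrow> x U \<noteq> 0 \<longrightarrow> even (card {i \<in> U. k < i})"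
    for x :: "nat set \<Rightarrow> 'a" and U
    by (cases "even (high_card k U)") (auto simp: high_card_def minus_eq_self_iff)
  then show ?thesis
    unfolding Ek0_def twist_grading_apply fun_eq_iff by blast
qed

lemma Ek1_eq_antifixed:
  "Ek1 k = {x \<in> grass. twist k t (-1) (\<lambda>_. 0) x = gneg (x :: nat set \<Rightarrow> 'a::field_char_0)}"
proof -
  have "(-1) ^ high_card k U * x U = - x U \<longleftrightarrow> x U \<noteq> 0 \<longrightarrow> odd (card {i \<in> U. k < i})"
    for x :: "nat set \<Rightarrow> 'a" and U
    by (cases "even (high_card k U)") (auto simp: high_card_def minus_eq_self_iff eq_commute[of _ "- _"])
  then show ?thesis
    unfolding Ek1_def twist_grading_apply gneg_def fun_eq_iff by blast
qed

lemma bij_betw_image_coincidence_set: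
  assumes bij: "bij_betw psi A A" and f: "\<forall>x\<in>A. f x \<in> A" and h: "\<forall>x\<in>A. h x \<in> A"
    and conj: "\<forall>x\<in>A. psi (f x) = g (psi x)" and comm: "\<forall>x\<in>A. psi (h x) = h (psi x)"
  shows "psi ` {x \<in> A. f x = h x} = {y \<in> A. g y = h y}"
proof
  show "psi ` {x \<in> A. f x = h x} \<subseteq> {y \<in> A. g y = h y}"
    using bij conj comm by (auto simp: bij_betw_def)
next
  show "{y \<in> A. g y = h y} \<subseteq> psi ` {x \<in> A. f x = h x}"
  proof
    fix y
    assume y: "y \<in> {y \<in> A. g y = h y}"
    with bij obtain x where x: "x \<in> A" "y = psi x"
      by (auto simp: bij_betw_def)
    with y conj comm have "psi (f x) = psi (h x)"
      by simp
    with bij f h x have "f x = h x"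
      by (auto simp: bij_betw_def dest: inj_onD)
    with x show "y \<in> psi ` {x \<in> A. f x = h x}"
      by blast
  qed
qed

lemma graded_iso_grass_psi:
  assumes "1 \<le> t" "odd t"
  shows "graded_iso (Ephi0 (grass_phi k t)) (Ephi1 (grass_phi k t)) (Ek0 k) (Ek1 k)
           (grass_psi k t :: (nat set \<Rightarrow> 'a::field_char_0) \<Rightarrow> _)"
proof -
  let ?phi = "grass_phi k t :: (nat set \<Rightarrow> 'a) \<Rightarrow> _" and ?psi = "grass_psi k t"
    and ?sigma = "twist k t (-1) (\<lambda>_. 0)"
  have bij: "bij_betw ?psi grass grass"
    unfolding grass_psi_def using assms(1) by (rule bij_betw_twist_one)
  have conj: "\<forall>x\<in>grass. ?psi (?phi x) = ?sigma (?psi x)"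
    using grass_psi_conj_grass_phi[OF assms] by blast
  have closed: "\<forall>x\<in>grass. ?phi x \<in> grass" "\<forall>x\<in>grass. ?psi x \<in> grass"
    by (simp_all add: grass_phi_def grass_psi_def twist_in_grass)
  have "?psi ` Ephi0 ?phi = Ek0 k"
    unfolding Ephi0_def Ek0_eq_fixed[of k t]
    by (rule bij_betw_image_coincidence_set[OF bij, where h = "\<lambda>x. x"]) (use conj closed in auto)
  moreover have "?psi ` Ephi1 ?phi = Ek1 k"
    unfolding Ephi1_def Ek1_eq_antifixed[of k t]
    by (rule bij_betw_image_coincidence_set[OF bij, where h = gneg])
      (use conj closed in \<open>auto simp: gneg_in_grass grass_psi_def twist_gneg\<close>)
  ultimately show ?thesis
    unfolding graded_iso_def using grass_endo_grass_psi[OF assms(1)] bij by blast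
qed

theorem mainTheorem9:
  fixes k t :: nat
  assumes "t \<ge> 1" and "odd t"
  shows "(\<exists>phi :: (nat set \<Rightarrow> 'a::field_char_0) \<Rightarrow> (nat set \<Rightarrow> 'a).
            grass_endo phi \<and>
            (\<forall>n. 1 \<le> n \<and> n \<le> k \<longrightarrow> phi (gen n) = gen n) \<and>
            (\<forall>n. k + 1 \<le> n \<and> n \<le> k + t \<longrightarrow> phi (gen n) = gneg (gen n)) \<and>
            (\<forall>n. k + t < n \<longrightarrow>
               phi (gen n) = gadd (gneg (gen n)) (gsmult 2 (gmult (gprod [1..<k+t+1]) (gen n)))))
       \<and> (\<forall>phi :: (nat set \<Rightarrow> 'a) \<Rightarrow> (nat set \<Rightarrow> 'a).
            grass_endo phi \<and>
            (\<forall>n. 1 \<le> n \<and> n \<le> k \<longrightarrow> phi (gen n) = gen n) \<and>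
            (\<forall>n. k + 1 \<le> n \<and> n \<le> k + t \<longrightarrow> phi (gen n) = gneg (gen n)) \<and>
            (\<forall>n. k + t < n \<longrightarrow>
               phi (gen n) = gadd (gneg (gen n)) (gsmult 2 (gmult (gprod [1..<k+t+1]) (gen n))))
            \<longrightarrow> (\<exists>psi. graded_iso (Ephi0 phi) (Ephi1 phi) (Ek0 k) (Ek1 k) psi))"
proof -
  have "grass_endo (grass_phi k t) \<and> prescribed_on_generators k t (grass_phi k t :: (nat set \<Rightarrow> 'a) \<Rightarrow> _)"
    using assms(1) by (simp add: grass_endo_grass_phi grass_phi_prescribed)
  moreover have "\<exists>psi. graded_iso (Ephi0 phi) (Ephi1 phi) (Ek0 k) (Ek1 k) psi"
    if "grass_endo phi" "prescribed_on_generators k t phi" for phi :: "(nat set \<Rightarrow> 'a) \<Rightarrow> _"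
  proof -
    have "\<forall>x\<in>grass. phi x = grass_phi k t x"
      using prescribed_grass_endo_eq_grass_phi[OF assms(1) that] by blast
    then have "Ephi0 phi = Ephi0 (grass_phi k t)" "Ephi1 phi = Ephi1 (grass_phi k t)"
      unfolding Ephi0_def Ephi1_def by auto
    with graded_iso_grass_psi[OF assms] show ?thesis
      by auto
  qed
  ultimately show ?thesis
    unfolding prescribed_on_generators_def by blast
qed

end
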